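(* Let $a,b,c>0$ and consider the Van der Pol system $\dot v_1=av_2$, $\dot v_2=-bv_1+c(1-v_1^2)v_2$, written as $\dot v=\phi(v)\omega$ with $\omega=\mathrm{col}(a,b,c)$ and $$\phi(v)=\begin{bmatrix}v_2&0&0\\0&-v_1&(1-v_1^2)v_2\end{bmatrix}.$$ Then for every initial condition $v(0)\ne0$, the function $t\mapsto\phi^T(v(t))\in\mathbb{R}^{3\times2}$ is persistently exciting.
   Context: Persistent excitation: a bounded piecewise continuous $f:[0,\infty)\to\mathbb{R}^{n\times m}$ is persistently exciting if there exist $\epsilon,t_0,T_0>0$ with $\frac1{T_0}\int_t^{t+T_0}f(s)f^T(s)\,ds\ge\epsilon I_n$ for all $t\ge t_0$. *)

theory Defs
  imports "HOL-Analysis.Analysis"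
begin

definition piecewise_continuous :: "(real \<Rightarrow> 'a::real_normed_vector) \<Rightarrow> bool" where
  "piecewise_continuous f \<longleftrightarrow>
     (\<forall>T\<ge>0. \<exists>S. finite S \<and> continuous_on ({0..T} - S) f \<and>
        (\<forall>s\<in>S. (s > 0 \<longrightarrow> (\<exists>l. (f \<longlongrightarrow> l) (at_left s))) \<and> (\<exists>l. (f \<longlongrightarrow> l) (at_right s))))"

definition persistently_exciting :: "(real \<Rightarrow> real^'m^'n) \<Rightarrow> bool" where
  "persistently_exciting f \<longleftrightarrow>
     bounded (f ` {0..}) \<and> piecewise_continuous f \<and>
     (\<exists>\<epsilon> t0 T0. \<epsilon> > 0 \<and> t0 > 0 \<and> T0 > 0 \<and>
        (\<forall>t\<ge>t0. \<forall>x::real^'n.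
           x \<bullet> (((1 / T0) *\<^sub>R integral {t..t+T0} (\<lambda>s. f s ** transpose (f s)) - \<epsilon> *\<^sub>R mat 1) *v x) \<ge> 0))"

definition vdp_phi :: "real \<Rightarrow> real \<Rightarrow> real^3^2" where
  "vdp_phi v1 v2 = vector [vector [v2, 0, 0], vector [0, - v1, (1 - v1\<^sup>2) * v2]]"

end

theory Submission
  imports Defs "HOL-Real_Asymp.Real_Asymp"
begin

text \<open>A nonzero Van der Pol trajectory is bounded: in the Lienard coordinate
  \<open>y = a v2 - c (v1 - v1\<^sup>3/3)\<close> the function \<open>y\<^sup>2/2 + ab v1\<^sup>2/2 - v1 arctan y\<close> decreases
  far from the origin. It also stays away from the origin, since the energy
  \<open>b v1\<^sup>2 + a v2\<^sup>2\<close> increases while \<open>|v1| < 1\<close>. Consequently \<open>v1\<close>, \<open>v2\<close> and the damping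
  term \<open>w = (1 - v1\<^sup>2) v2\<close> each reach a fixed size in every window of bounded length;
  being Lipschitz, their squares have integrals bounded below on every window of length 3.
  The quadratic form of \<open>\<integral> \<phi>\<^sup>T \<phi>\<close> is
  \<open>x\<^sub>1\<^sup>2 \<integral>v2\<^sup>2 + x\<^sub>2\<^sup>2 \<integral>v1\<^sup>2 + x\<^sub>3\<^sup>2 \<integral>w\<^sup>2 - 2 x\<^sub>2 x\<^sub>3 \<integral>v1 w\<close>, and the cross term is an
  increment of the bounded function \<open>(v1\<^sup>2/2 - v1\<^sup>4/4)/a\<close>, so it is negligible on long
  windows.\<close>

section \<open>Functions on the half-line\<close>

lemma mvt_halfline:
  fixes f f' :: "real \<Rightarrow> real"
  assumes f': "\<And>t. t \<ge> 0 \<Longrightarrow> (f has_real_derivative f' t) (at t within {0..})"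
    and "0 \<le> x" "x < y"
  obtains \<xi> where "x < \<xi>" "\<xi> < y" "f y - f x = f' \<xi> * (y - x)"
proof -
  have "\<exists>\<xi>\<in>{x<..<y}. f y - f x = (\<lambda>h. f' \<xi> * h) (y - x)"
  proof (rule mvt_simple[OF \<open>x < y\<close>])
    fix z assume "x \<le> z" "z \<le> y"
    then have "(f has_real_derivative f' z) (at z within {x..y})"
      using has_field_derivative_subset[OF f'] \<open>0 \<le> x\<close> by auto
    then show "(f has_derivative (\<lambda>h. f' z * h)) (at z within {x..y})"
      by (simp add: has_field_derivative_def)
  qed
  then show thesis using that by auto
qed

lemma lipschitz_halfline:
  fixes f f' :: "real \<Rightarrow> real"
  assumes f': "\<And>t. t \<ge> 0 \<Longrightarrow> (f has_real_derivative f' t) (at t within {0..})"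
    and bound: "\<And>t. t \<ge> 0 \<Longrightarrow> \<bar>f' t\<bar> \<le> L"
    and "0 \<le> x" "x \<le> y"
  shows "\<bar>f y - f x\<bar> \<le> L * (y - x)"
proof (cases "x = y")
  case False
  with \<open>x \<le> y\<close> have "x < y" by simp
  then obtain \<xi> where "x < \<xi>" "\<xi> < y" "f y - f x = f' \<xi> * (y - x)"
    using mvt_halfline[OF f' \<open>0 \<le> x\<close>] by blast
  moreover have "\<bar>f' \<xi>\<bar> \<le> L" using bound \<open>0 \<le> x\<close> \<open>x < \<xi>\<close> by auto
  ultimately show ?thesis using \<open>x \<le> y\<close> by (simp add: abs_mult mult_right_mono)
qed simp

lemma lipschitz_halfline_of_bounded_deriv:
  fixes f f' :: "real \<Rightarrow> real"
  assumes f': "\<And>t. t \<ge> 0 \<Longrightarrow> (f has_real_derivative f' t) (at t within {0..})"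
    and "bounded (f' ` {0..})"
  obtains L where "L > 0" "\<And>x y. 0 \<le> x \<Longrightarrow> x \<le> y \<Longrightarrow> \<bar>f y - f x\<bar> \<le> L * (y - x)"
proof -
  obtain L where "L > 0" "\<And>t. t \<ge> 0 \<Longrightarrow> \<bar>f' t\<bar> \<le> L"
    using assms(2) unfolding bounded_pos by auto
  with lipschitz_halfline[OF f'] that show thesis by blast
qed

lemma continuous_on_halfline:
  fixes f f' :: "real \<Rightarrow> real"
  assumes "\<And>t. t \<ge> 0 \<Longrightarrow> (f has_real_derivative f' t) (at t within {0..})"
  shows "continuous_on {0..} f"
  by (rule DERIV_continuous_on[where D=f']) (use assms in auto)

lemma small_on_window_imp_small_deriv:
  fixes f f' :: "real \<Rightarrow> real"
  assumes f': "\<And>t. t \<ge> 0 \<Longrightarrow> (f has_real_derivative f' t) (at t within {0..})"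
    and "s \<ge> 0" and small: "\<And>\<tau>. s \<le> \<tau> \<Longrightarrow> \<tau> \<le> s + 1 \<Longrightarrow> \<bar>f \<tau>\<bar> < \<eta>"
  obtains \<xi> where "s < \<xi>" "\<xi> < s + 1" "\<bar>f' \<xi>\<bar> < 2 * \<eta>"
proof -
  obtain \<xi> where "s < \<xi>" "\<xi> < s + 1" "f (s + 1) - f s = f' \<xi> * (s + 1 - s)"
    using mvt_halfline[OF f' \<open>s \<ge> 0\<close>, of "s + 1"] by auto
  moreover have "\<bar>f (s + 1) - f s\<bar> < 2 * \<eta>" using small[of s] small[of "s + 1"] by simp
  ultimately show thesis using that by auto
qed

text \<open>At the last time \<open>t\<^sub>0\<close> before \<open>t\<close> with \<open>f t\<^sub>0 \<le> L\<close>, the mean value theorem on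
  \<open>[t\<^sub>0, t]\<close> produces a point above \<open>L\<close> where \<open>f\<close> increases.\<close>
lemma halfline_sublevel_invariant:
  fixes f f' :: "real \<Rightarrow> real"
  assumes f': "\<And>t. t \<ge> 0 \<Longrightarrow> (f has_real_derivative f' t) (at t within {0..})"
    and "f 0 \<le> L"
    and nonincreasing: "\<And>t. t \<ge> 0 \<Longrightarrow> f t > L \<Longrightarrow> f' t \<le> 0"
    and "t \<ge> 0"
  shows "f t \<le> L"
proof (rule ccontr)
  assume "\<not> f t \<le> L"
  define S where "S = {0..t} \<inter> f -` {..L}"
  have "closed S" unfolding S_def
    by (rule continuous_closed_preimage)
      (auto intro: continuous_on_subset[OF continuous_on_halfline[OF f']])
  moreover have "0 \<in> S" using assms by (auto simp: S_def)
  moreover have bdd: "bdd_above S" unfolding S_def by (auto intro: bdd_aboveI[where M=t])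
  ultimately have "Sup S \<in> S" using closed_contains_Sup by blast
  then have "0 \<le> Sup S" "f (Sup S) \<le> L" "Sup S < t"
    using \<open>\<not> f t \<le> L\<close> by (auto simp: S_def less_le)
  then obtain \<xi> where \<xi>: "Sup S < \<xi>" "\<xi> < t" "f t - f (Sup S) = f' \<xi> * (t - Sup S)"
    using mvt_halfline[OF f' \<open>0 \<le> Sup S\<close> \<open>Sup S < t\<close>] by blast
  have "\<xi> \<notin> S" using cSup_upper[OF _ bdd] \<xi>(1) by fastforce
  then have "f' \<xi> \<le> 0" using nonincreasing \<xi> \<open>0 \<le> Sup S\<close> by (auto simp: S_def)
  then have "f' \<xi> * (t - Sup S) \<le> 0" using \<xi> by (simp add: mult_nonpos_nonneg)
  with \<xi> \<open>f (Sup S) \<le> L\<close> \<open>\<not> f t \<le> L\<close> show False by linarith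
qed

lemma bounded_above_and_eventually_negative:
  fixes p :: "real \<Rightarrow> real"
  assumes "continuous_on {0..} p" "filterlim p at_bot at_top"
  obtains R M where "R \<ge> 0" "\<And>u. 0 \<le> u \<Longrightarrow> p u \<le> M" "\<And>u. R < u \<Longrightarrow> p u \<le> -1"
proof -
  obtain R0 where R0: "\<And>u. u \<ge> R0 \<Longrightarrow> p u \<le> -1"
    using assms(2) unfolding filterlim_at_bot eventually_at_top_linorder by blast
  define R where "R = max R0 0"
  have "compact (p ` {0..R})"
    by (rule compact_continuous_image) (auto intro: continuous_on_subset[OF assms(1)])
  then obtain M0 where "\<forall>z\<in>p ` {0..R}. norm z \<le> M0"
    using compact_imp_bounded bounded_pos by blast
  then have M0: "\<And>u. u \<in> {0..R} \<Longrightarrow> p u \<le> M0" by force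
  have "p u \<le> max M0 (-1)" if "0 \<le> u" for u
  proof (cases "u \<le> R")
    case False
    then have "R0 \<le> u" by (simp add: R_def)
    then show ?thesis using R0[of u] by simp
  qed (use M0[of u] that in \<open>simp add: le_max_iff_disj\<close>)
  moreover have "R \<ge> 0" "\<And>u. R < u \<Longrightarrow> p u \<le> -1" using R0 by (auto simp: R_def)
  ultimately show thesis using that by blast
qed

definition recurrently_large :: "(real \<Rightarrow> real) \<Rightarrow> real \<Rightarrow> bool" where
  "recurrently_large g h \<longleftrightarrow> (\<exists>\<eta>>0. \<forall>s\<ge>0. \<exists>s0\<in>{s..s+h}. \<eta> \<le> \<bar>g s0\<bar>)"

lemma recurrently_large_mono:
  assumes "recurrently_large g h" "h \<le> h'"
  shows "recurrently_large g h'"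
proof -
  have "{s..s+h} \<subseteq> {s..s+h'}" for s using assms(2) by auto
  with assms(1) show ?thesis unfolding recurrently_large_def by blast
qed

lemma lipschitz_keeps_half:
  fixes g :: "real \<Rightarrow> real"
  assumes lip: "\<And>x y. 0 \<le> x \<Longrightarrow> x \<le> y \<Longrightarrow> \<bar>g y - g x\<bar> \<le> L * (y - x)"
    and "0 \<le> s0" "\<eta> \<le> \<bar>g s0\<bar>" "s0 \<le> \<tau>" "L * (\<tau> - s0) \<le> \<eta> / 2"
  shows "\<eta> / 2 \<le> \<bar>g \<tau>\<bar>"
  using lip[of s0 \<tau>] assms(2-5) by linarith

lemma integral_square_bounded_below:
  fixes g :: "real \<Rightarrow> real"
  assumes cont: "continuous_on {0..} g"
    and lip: "\<And>x y. 0 \<le> x \<Longrightarrow> x \<le> y \<Longrightarrow> \<bar>g y - g x\<bar> \<le> L * (y - x)" and "L > 0"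
    and "recurrently_large g h"
  shows "\<exists>\<kappa>>0. \<forall>s\<ge>0. \<kappa> \<le> integral {s..s+h+1} (\<lambda>\<tau>. (g \<tau>)\<^sup>2)"
proof -
  obtain \<eta> where "\<eta> > 0" and large: "\<And>s. s \<ge> 0 \<Longrightarrow> \<exists>s0\<in>{s..s+h}. \<eta> \<le> \<bar>g s0\<bar>"
    using assms(4) unfolding recurrently_large_def by blast
  define r where "r = min 1 (\<eta> / (2 * L))"
  have r: "r > 0" "r \<le> 1" "L * r \<le> \<eta> / 2"
    using \<open>L > 0\<close> \<open>\<eta> > 0\<close> by (auto simp: r_def min_def field_simps)
  have cont2: "continuous_on {0..} (\<lambda>\<tau>. (g \<tau>)\<^sup>2)" by (intro continuous_intros cont)
  have "r * \<eta>\<^sup>2 / 4 \<le> integral {s..s+h+1} (\<lambda>\<tau>. (g \<tau>)\<^sup>2)" if "s \<ge> 0" for s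
  proof -
    obtain s0 where s0: "s \<le> s0" "s0 \<le> s + h" "\<eta> \<le> \<bar>g s0\<bar>" using large[OF \<open>s \<ge> 0\<close>] by auto
    have int: "(\<lambda>\<tau>. (g \<tau>)\<^sup>2) integrable_on {x..y}" if "0 \<le> x" for x y
      by (rule integrable_continuous_interval, rule continuous_on_subset[OF cont2]) (use that in auto)
    have "\<eta>\<^sup>2 / 4 \<le> (g \<tau>)\<^sup>2" if "\<tau> \<in> {s0..s0+r}" for \<tau>
    proof -
      have "L * (\<tau> - s0) \<le> L * r" using that \<open>L > 0\<close> by (intro mult_left_mono) auto
      then have "\<bar>\<eta> / 2\<bar> \<le> \<bar>g \<tau>\<bar>"
        using lipschitz_keeps_half[OF lip, of s0 \<eta> \<tau>] that r s0 \<open>s \<ge> 0\<close> \<open>\<eta> > 0\<close> by auto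
      then show ?thesis unfolding abs_le_square_iff by (simp add: power_divide)
    qed
    then have "r * \<eta>\<^sup>2 / 4 \<le> integral {s0..s0+r} (\<lambda>\<tau>. (g \<tau>)\<^sup>2)"
      using integral_le[of "\<lambda>_. \<eta>\<^sup>2 / 4" "{s0..s0+r}"] int[of s0] r s0 \<open>s \<ge> 0\<close> by auto
    also have "\<dots> \<le> integral {s..s+h+1} (\<lambda>\<tau>. (g \<tau>)\<^sup>2)"
      by (rule integral_subset_le) (use int s0 r \<open>s \<ge> 0\<close> in auto)
    finally show ?thesis .
  qed
  moreover have "r * \<eta>\<^sup>2 / 4 > 0" using r \<open>\<eta> > 0\<close> by simp
  ultimately show ?thesis by blast
qed

lemma integral_ge_multiple_of_windows:
  fixes G :: "real \<Rightarrow> real"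
  assumes cont: "continuous_on {0..} G"
    and window: "\<And>s. s \<ge> 0 \<Longrightarrow> \<kappa> \<le> integral {s..s+H} G"
    and "H > 0" "t \<ge> 0"
  shows "real N * \<kappa> \<le> integral {t..t + real N * H} G"
proof (induction N)
  case (Suc N)
  have "G integrable_on {t..t + real (Suc N) * H}"
    by (rule integrable_continuous_interval, rule continuous_on_subset[OF cont]) (use \<open>t \<ge> 0\<close> in auto)
  then have "integral {t..t + real (Suc N) * H} G
      = integral {t..t + real N * H} G + integral {t + real N * H..t + real N * H + H} G"
    using Henstock_Kurzweil_Integration.integral_combine[where a=t and c="t + real N * H" and b="t + real (Suc N) * H" and f=G] \<open>H > 0\<close>
    by (simp add: algebra_simps)
  moreover have "\<kappa> \<le> integral {t + real N * H..t + real N * H + H} G"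
    using window[of "t + real N * H"] \<open>t \<ge> 0\<close> \<open>H > 0\<close> by simp
  ultimately show ?case using Suc by (simp add: algebra_simps)
qed simp

lemma inner_integral_mult_vec:
  fixes M :: "real \<Rightarrow> real^'n^'n"
  assumes "M integrable_on S"
  shows "x \<bullet> (integral S M *v x) = integral S (\<lambda>s. x \<bullet> (M s *v x))"
proof -
  have "bounded_linear (\<lambda>A::real^'n^'n. x \<bullet> (A *v x))"
    unfolding linear_conv_bounded_linear[symmetric]
    by (rule linearI) (simp_all add: matrix_vector_mult_add_rdistrib inner_add_right
        scaleR_matrix_vector_assoc[symmetric] inner_scaleR_right)
  from integral_linear[OF assms this] show ?thesis by (simp add: comp_def)
qed

lemma piecewise_continuous_if_continuous:
  assumes "continuous_on {0..} f"
  shows "piecewise_continuous f"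
  unfolding piecewise_continuous_def
proof (intro allI impI exI[of _ "{}"] conjI)
  fix T :: real
  show "continuous_on ({0..T} - {}) f" by (rule continuous_on_subset[OF assms]) auto
qed auto

lemma abs_le_of_square_le:
  fixes x :: real
  assumes "x\<^sup>2 \<le> M"
  shows "\<bar>x\<bar> \<le> 1 + M"
proof (cases "\<bar>x\<bar> \<le> 1")
  case False
  then have "\<bar>x\<bar> \<le> \<bar>x\<bar> * \<bar>x\<bar>" using mult_left_mono[of 1 "\<bar>x\<bar>" "\<bar>x\<bar>"] by simp
  with assms show ?thesis by (simp add: power2_eq_square abs_mult_self_eq)
qed (use assms zero_le_power2[of x] in linarith)

lemma mult_arctan_ge: "3/4 * \<bar>y\<bar> - 1 \<le> y * arctan y"
proof -
  have nonneg: "3/4 * z - 1 \<le> z * arctan z" if "z \<ge> 0" for z :: real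
  proof (cases "z \<ge> 1")
    case True
    then have "3/4 \<le> arctan z"
      using arctan_monotone'[of 1 z] arctan_one pi_gt3 by simp
    then show ?thesis using mult_left_mono[of "3/4" "arctan z" z] True by linarith
  next
    case False
    have "0 \<le> z * arctan z" using that arctan_monotone'[of 0 z] by simp
    with False show ?thesis by linarith
  qed
  show ?thesis
    using nonneg[of y] nonneg[of "-y"] by (cases "y \<ge> 0") (auto simp: arctan_minus)
qed

lemma abs_mult_arctan_le: "\<bar>x * arctan y\<bar> \<le> 2 * \<bar>x\<bar>"
proof -
  have "\<bar>arctan y\<bar> \<le> 2" using arctan_bounded[of y] pi_less_4 by linarith
  then show ?thesis unfolding abs_mult by (simp add: mult.commute mult_left_mono)
qed

lemma quadratic_form_lower_bound:
  fixes x1 x2 x3 A1 A2 A3 J C \<kappa> m :: real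
  assumes "m \<le> A1" "m \<le> A2" "m \<le> A3" "\<bar>J\<bar> \<le> C" "C + \<kappa> \<le> m"
  shows "(x1\<^sup>2 + x2\<^sup>2 + x3\<^sup>2) * \<kappa> \<le> x1\<^sup>2 * A1 + x2\<^sup>2 * A2 + x3\<^sup>2 * A3 - 2 * (x2 * x3) * J"
proof -
  have "2 * (x2 * x3) * J \<le> (2 * \<bar>x2\<bar> * \<bar>x3\<bar>) * \<bar>J\<bar>"
    using abs_ge_self[of "2 * (x2 * x3) * J"] by (simp add: abs_mult mult.assoc)
  also have "\<dots> \<le> (2 * \<bar>x2\<bar> * \<bar>x3\<bar>) * C" using assms(4) by (intro mult_left_mono) auto
  also have "\<dots> \<le> (x2\<^sup>2 + x3\<^sup>2) * C"
    using sum_squares_bound[of "\<bar>x2\<bar>" "\<bar>x3\<bar>"] assms(4) by (intro mult_right_mono) auto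
  finally have cross: "2 * (x2 * x3) * J \<le> (x2\<^sup>2 + x3\<^sup>2) * C" .
  have "x1\<^sup>2 * m + x2\<^sup>2 * m + x3\<^sup>2 * m \<le> x1\<^sup>2 * A1 + x2\<^sup>2 * A2 + x3\<^sup>2 * A3"
    using assms(1-3) by (intro add_mono mult_left_mono) auto
  moreover have "(x1\<^sup>2 + x2\<^sup>2 + x3\<^sup>2) * (C + \<kappa>) \<le> (x1\<^sup>2 + x2\<^sup>2 + x3\<^sup>2) * m"
    using assms(5) by (intro mult_left_mono) auto
  moreover have "0 \<le> x1\<^sup>2 * C" using assms(4) by simp
  ultimately show ?thesis using cross by (simp add: algebra_simps)
qed

lemma dist_le_near_unit_squares:
  fixes p q :: real
  assumes "\<bar>1 - p\<^sup>2\<bar> < 3/4" "\<bar>1 - q\<^sup>2\<bar> < 3/4" "\<bar>q - p\<bar> \<le> 1/2"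
  shows "\<bar>q - p\<bar> \<le> \<bar>1 - p\<^sup>2\<bar> + \<bar>1 - q\<^sup>2\<bar>"
proof -
  have "1/4 \<le> p\<^sup>2" "1/4 \<le> q\<^sup>2" using assms(1,2) unfolding abs_less_iff by linarith+
  then have "(1/2)\<^sup>2 \<le> p\<^sup>2" "(1/2)\<^sup>2 \<le> q\<^sup>2" by (simp_all add: power_divide)
  then have "1/2 \<le> \<bar>p\<bar>" "1/2 \<le> \<bar>q\<bar>"
    using abs_le_square_iff[of "1/2" p] abs_le_square_iff[of "1/2" q] by simp_all
  then have "1 \<le> \<bar>q + p\<bar>" using assms(3) by linarith
  then have "\<bar>q - p\<bar> \<le> \<bar>q - p\<bar> * \<bar>q + p\<bar>" using mult_left_mono[of 1 "\<bar>q + p\<bar>" "\<bar>q - p\<bar>"] by simp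
  also have "\<dots> = \<bar>q\<^sup>2 - p\<^sup>2\<bar>" by (simp add: power2_eq_square algebra_simps flip: abs_mult)
  finally show ?thesis by linarith
qed

text \<open>Derivative of \<open>y\<^sup>2/2 + k x\<^sup>2/2 - x arctan y\<close> along the Lienard system
  \<open>x' = y + c (x - x\<^sup>3/3)\<close>, \<open>y' = - k x\<close>.\<close>
definition lyapunov_rate :: "real \<Rightarrow> real \<Rightarrow> real \<Rightarrow> real \<Rightarrow> real" where
  "lyapunov_rate k c x y = k*c*x*(x - x^3/3) - (y + c*(x - x^3/3)) * arctan y + k*x\<^sup>2/(1 + y\<^sup>2)"

lemma lyapunov_rate_le:
  fixes k c x y :: real
  assumes "k > 0" "c > 0"
  shows "lyapunov_rate k c x y
    \<le> k*c*\<bar>x\<bar>^2 - k*c*\<bar>x\<bar>^4/3 + 2*c*\<bar>x\<bar>^3/3 + 2*c*\<bar>x\<bar> + k*\<bar>x\<bar>^2 + 1 - 3/4*\<bar>y\<bar>"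
proof -
  have "\<bar>c*(x - x^3/3)\<bar> \<le> c*(\<bar>x\<bar> + \<bar>x\<bar>^3/3)"
    using abs_triangle_ineq4[of x "x^3/3"] \<open>c > 0\<close> by (simp add: abs_mult power_abs)
  then have "\<bar>c*(x - x^3/3) * arctan y\<bar> \<le> 2 * (c*(\<bar>x\<bar> + \<bar>x\<bar>^3/3))"
    using abs_mult_arctan_le[of "c*(x - x^3/3)" y] by linarith
  then have cubic: "- (c*(x - x^3/3) * arctan y) \<le> 2*c*\<bar>x\<bar>^3/3 + 2*c*\<bar>x\<bar>"
    by (simp add: algebra_simps)
  have "k*x\<^sup>2/(1 + y\<^sup>2) \<le> k*x\<^sup>2"
    using \<open>k > 0\<close> divide_left_mono[of 1 "1 + y\<^sup>2" "k*x\<^sup>2"] by (simp add: add_pos_nonneg)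
  moreover have "k*c*x*(x - x^3/3) = k*c*\<bar>x\<bar>^2 - k*c*\<bar>x\<bar>^4/3" "k*x\<^sup>2 = k*\<bar>x\<bar>^2"
    by (simp_all add: algebra_simps power2_eq_square power4_eq_xxxx power3_eq_cube)
  moreover have "(y + c*(x - x^3/3)) * arctan y = y * arctan y + c*(x - x^3/3) * arctan y"
    by (rule distrib_right)
  ultimately show ?thesis
    using mult_arctan_ge[of y] cubic unfolding lyapunov_rate_def by linarith
qed

section \<open>The Van der Pol regressor\<close>

lemma vdp_phi_nth:
  "vdp_phi p q $ i $ j = (if i = 1 then (if j = 1 then q else 0)
     else if j = 1 then 0 else if j = 2 then - p else (1 - p\<^sup>2) * q)"
  using exhaust_2[of i] exhaust_3[of j] by (auto simp: vdp_phi_def)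

lemma vdp_gram_quadratic_form:
  fixes x :: "real^3"
  shows "x \<bullet> ((transpose (vdp_phi p q) ** transpose (transpose (vdp_phi p q))) *v x)
     = (q * x$1)\<^sup>2 + ((1 - p\<^sup>2) * q * x$3 - p * x$2)\<^sup>2"
proof -
  let ?P = "vdp_phi p q"
  have "x \<bullet> ((transpose ?P ** ?P) *v x) = x \<bullet> (transpose ?P *v (?P *v x))"
    by (simp add: matrix_vector_mul_assoc)
  also have "\<dots> = (x v* transpose ?P) \<bullet> (?P *v x)" by (rule dot_lmul_matrix[symmetric])
  also have "\<dots> = (?P *v x) \<bullet> (?P *v x)" by (simp only: vector_transpose_matrix)
  also have "\<dots> = (q * x$1)\<^sup>2 + ((1 - p\<^sup>2) * q * x$3 - p * x$2)\<^sup>2"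
    by (simp add: inner_vec_def sum_2 sum_3 matrix_vector_mult_def vdp_phi_nth
        power2_eq_square algebra_simps)
  finally show ?thesis by simp
qed

lemma continuous_on_vdp_phi_nth:
  assumes "continuous_on S f" "continuous_on S g"
  shows "continuous_on S (\<lambda>s. vdp_phi (f s) (g s) $ i $ j)"
  unfolding vdp_phi_nth
  by (cases "i = 1"; cases "j = 1"; cases "j = 2") (auto intro!: continuous_intros assms)

lemma continuous_on_vdp_regressor:
  assumes "continuous_on S f" "continuous_on S g"
  shows "continuous_on S (\<lambda>s. transpose (vdp_phi (f s) (g s)))"
  unfolding transpose_def by (intro continuous_on_vec_lambda continuous_on_vdp_phi_nth assms)

lemma continuous_on_vdp_gram:
  assumes "continuous_on S f" "continuous_on S g"
  shows "continuous_on S (\<lambda>s. transpose (vdp_phi (f s) (g s))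
    ** transpose (transpose (vdp_phi (f s) (g s))))"
  unfolding transpose_transpose matrix_matrix_mult_def transpose_def
  by (simp, intro continuous_on_vec_lambda continuous_on_sum continuous_on_mult
      continuous_on_vdp_phi_nth assms)

section \<open>Boundedness and energy of trajectories\<close>

locale van_der_pol =
  fixes a b c :: real and v1 v2 :: "real \<Rightarrow> real"
  assumes a_pos: "a > 0" and b_pos: "b > 0" and c_pos: "c > 0"
    and v1_deriv: "\<And>t. t \<ge> 0 \<Longrightarrow> (v1 has_real_derivative a * v2 t) (at t within {0..})"
    and v2_deriv: "\<And>t. t \<ge> 0 \<Longrightarrow>
      (v2 has_real_derivative (- b * v1 t + c * (1 - (v1 t)\<^sup>2) * v2 t)) (at t within {0..})"
begin

lemma continuous_v1: "continuous_on {0..} v1"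
  by (rule continuous_on_halfline[OF v1_deriv])

lemma continuous_v2: "continuous_on {0..} v2"
  by (rule continuous_on_halfline[OF v2_deriv])

definition damping :: "real \<Rightarrow> real" where
  "damping t = (1 - (v1 t)\<^sup>2) * v2 t"

lemma damping_deriv:
  assumes "t \<ge> 0"
  shows "(damping has_real_derivative
    - 2 * a * v1 t * (v2 t)\<^sup>2 + (1 - (v1 t)\<^sup>2) * (- b * v1 t + c * (1 - (v1 t)\<^sup>2) * v2 t))
    (at t within {0..})"
  unfolding damping_def[abs_def]
  by (rule derivative_eq_intros v1_deriv[OF assms] v2_deriv[OF assms] refl | simp)+
    (simp add: algebra_simps power2_eq_square)

lemma continuous_damping: "continuous_on {0..} damping"
  by (rule continuous_on_halfline[OF damping_deriv])

definition lienard :: "real \<Rightarrow> real" where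
  "lienard t = a * v2 t - c * (v1 t - (v1 t)^3/3)"

lemma lienard_deriv:
  assumes "t \<ge> 0"
  shows "(lienard has_real_derivative - (a * b * v1 t)) (at t within {0..})"
proof -
  have "(lienard has_real_derivative
      a * (- b * v1 t + c * (1 - (v1 t)\<^sup>2) * v2 t) - c * (a * v2 t - 3 * (v1 t)^2 * (a * v2 t) / 3))
      (at t within {0..})"
    unfolding lienard_def[abs_def]
    by (rule derivative_eq_intros v1_deriv[OF assms] v2_deriv[OF assms] refl | simp)+
  then show ?thesis by (rule DERIV_cong) (simp add: algebra_simps power2_eq_square)
qed

definition lyapunov :: "real \<Rightarrow> real" where
  "lyapunov t = (lienard t)\<^sup>2/2 + a*b*(v1 t)\<^sup>2/2 - v1 t * arctan (lienard t)"

lemma lyapunov_deriv: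
  assumes "t \<ge> 0"
  shows "(lyapunov has_real_derivative lyapunov_rate (a*b) c (v1 t) (lienard t)) (at t within {0..})"
proof -
  have "(lyapunov has_real_derivative
      lienard t * (- (a * b * v1 t)) + a * b * v1 t * (a * v2 t)
      - (a * v2 t * arctan (lienard t) + v1 t * (- (a * b * v1 t) / (1 + (lienard t)\<^sup>2))))
      (at t within {0..})"
    unfolding lyapunov_def[abs_def]
    by (rule derivative_eq_intros v1_deriv[OF assms] lienard_deriv[OF assms] DERIV_arctan refl
        | simp)+ (simp add: divide_inverse mult_ac)
  moreover have "a * v2 t = lienard t + c * (v1 t - (v1 t)^3/3)" by (simp add: lienard_def)
  ultimately show ?thesis
    by (simp add: lyapunov_rate_def algebra_simps power2_eq_square)
qed

lemma lyapunov_decreasing_far: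
  obtains R Y where "R \<ge> 0" "Y \<ge> 0"
    "\<And>t. R < \<bar>v1 t\<bar> \<or> Y < \<bar>lienard t\<bar> \<Longrightarrow> lyapunov_rate (a*b) c (v1 t) (lienard t) \<le> 0"
proof -
  have "a * b > 0" using a_pos b_pos by simp
  define P where "P u = a*b*c*u^2 - a*b*c*u^4/3 + 2*c*u^3/3 + 2*c*u + a*b*u^2 + 1" for u :: real
  have "continuous_on {0..} P" unfolding P_def by (intro continuous_intros) auto
  moreover have "filterlim P at_bot at_top"
    unfolding P_def using a_pos b_pos c_pos by real_asymp
  ultimately obtain R M where "R \<ge> 0" and M: "\<And>u. 0 \<le> u \<Longrightarrow> P u \<le> M"
    and R: "\<And>u. R < u \<Longrightarrow> P u \<le> -1"
    using bounded_above_and_eventually_negative by blast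
  have rate: "lyapunov_rate (a*b) c (v1 t) (lienard t) \<le> P \<bar>v1 t\<bar> - 3/4 * \<bar>lienard t\<bar>" for t
    using lyapunov_rate_le[OF \<open>a * b > 0\<close> c_pos] by (simp add: P_def)
  show thesis
  proof (rule that[of R "4/3 * \<bar>M\<bar> + 1"])
    fix t assume "R < \<bar>v1 t\<bar> \<or> 4/3 * \<bar>M\<bar> + 1 < \<bar>lienard t\<bar>"
    then show "lyapunov_rate (a*b) c (v1 t) (lienard t) \<le> 0"
    proof
      assume "R < \<bar>v1 t\<bar>"
      then show ?thesis using rate[of t] R[of "\<bar>v1 t\<bar>"] abs_ge_zero[of "lienard t"] by linarith
    next
      assume "4/3 * \<bar>M\<bar> + 1 < \<bar>lienard t\<bar>"
      then show ?thesis using rate[of t] M[of "\<bar>v1 t\<bar>"] abs_ge_self[of M] by linarith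
    qed
  qed (use \<open>R \<ge> 0\<close> in auto)
qed

lemma lyapunov_bounded_above: "\<exists>L. \<forall>t\<ge>0. lyapunov t \<le> L"
proof -
  obtain R Y where "R \<ge> 0" "Y \<ge> 0" and decreasing:
    "\<And>t. R < \<bar>v1 t\<bar> \<or> Y < \<bar>lienard t\<bar> \<Longrightarrow> lyapunov_rate (a*b) c (v1 t) (lienard t) \<le> 0"
    using lyapunov_decreasing_far by blast
  define L where "L = max (lyapunov 0) (Y\<^sup>2/2 + a*b*R\<^sup>2/2 + 2*R)"
  have "lyapunov t \<le> L" if "t \<ge> 0" for t
  proof (rule halfline_sublevel_invariant[OF lyapunov_deriv _ _ that])
    show "lyapunov 0 \<le> L" by (simp add: L_def)
  next
    fix s :: real assume "s \<ge> 0" "L < lyapunov s"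
    have "R < \<bar>v1 s\<bar> \<or> Y < \<bar>lienard s\<bar>"
    proof (rule ccontr)
      assume "\<not> ?thesis"
      then have "(lienard s)\<^sup>2 \<le> Y\<^sup>2" "(v1 s)\<^sup>2 \<le> R\<^sup>2" "\<bar>v1 s\<bar> \<le> R"
        using abs_le_square_iff[of "lienard s" Y] abs_le_square_iff[of "v1 s" R] \<open>R \<ge> 0\<close> \<open>Y \<ge> 0\<close>
        by auto
      moreover from this(2) have "a*b*(v1 s)\<^sup>2 \<le> a*b*R\<^sup>2"
        using a_pos b_pos by (simp add: mult_left_mono)
      moreover have "Y\<^sup>2/2 + a*b*R\<^sup>2/2 + 2*R \<le> L" by (simp add: L_def)
      ultimately show False
        using \<open>L < lyapunov s\<close> abs_mult_arctan_le[of "v1 s" "lienard s"]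
          abs_ge_minus_self[of "v1 s * arctan (lienard s)"]
        unfolding lyapunov_def by linarith
    qed
    then show "lyapunov_rate (a*b) c (v1 s) (lienard s) \<le> 0" by (rule decreasing)
  qed
  then show ?thesis by blast
qed

lemma lyapunov_lower_bound:
  "(lienard t)\<^sup>2/2 + a*b*(v1 t)\<^sup>2/4 - 4/(a*b) \<le> lyapunov t"
proof -
  have "a * b > 0" using a_pos b_pos by simp
  have "0 \<le> a*b/4 * (\<bar>v1 t\<bar> - 4/(a*b))\<^sup>2" using \<open>a * b > 0\<close> by simp
  also have "\<dots> = a*b*(v1 t)\<^sup>2/4 - 2*\<bar>v1 t\<bar> + 4/(a*b)"
    using a_pos b_pos by (simp add: power2_eq_square field_simps)
  finally show ?thesis
    using abs_mult_arctan_le[of "v1 t" "lienard t"] abs_ge_self[of "v1 t * arctan (lienard t)"]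
    unfolding lyapunov_def by linarith
qed

lemma trajectory_bounded: "\<exists>B. \<forall>t\<ge>0. \<bar>v1 t\<bar> \<le> B \<and> \<bar>v2 t\<bar> \<le> B"
proof -
  obtain L where L: "\<And>t. t \<ge> 0 \<Longrightarrow> lyapunov t \<le> L" using lyapunov_bounded_above by blast
  have "a * b > 0" using a_pos b_pos by simp
  define K where "K = L + 4/(a*b)"
  define B1 where "B1 = 1 + 4*K/(a*b)"
  define By where "By = 1 + 2*K"
  have v1: "\<bar>v1 t\<bar> \<le> B1" and y: "\<bar>lienard t\<bar> \<le> By" if "t \<ge> 0" for t
  proof -
    have *: "(lienard t)\<^sup>2/2 + a*b*(v1 t)\<^sup>2/4 \<le> K"
      using lyapunov_lower_bound[of t] L[OF that] unfolding K_def by linarith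
    moreover have "0 \<le> a*b*(v1 t)\<^sup>2" using \<open>a * b > 0\<close> by simp
    ultimately have "(lienard t)\<^sup>2 \<le> 2*K" by linarith
    then show "\<bar>lienard t\<bar> \<le> By" unfolding By_def by (rule abs_le_of_square_le)
    have "a*b*(v1 t)\<^sup>2 \<le> 4*K" using * zero_le_power2[of "lienard t"] by linarith
    then have "(v1 t)\<^sup>2 \<le> 4*K/(a*b)"
      using \<open>a * b > 0\<close> by (simp add: le_divide_eq mult.commute)
    then show "\<bar>v1 t\<bar> \<le> B1" unfolding B1_def by (rule abs_le_of_square_le)
  qed
  define B2 where "B2 = (By + c*(B1 + B1^3/3))/a"
  have v2: "\<bar>v2 t\<bar> \<le> B2" if "t \<ge> 0" for t
  proof -
    have "\<bar>(v1 t)^3/3\<bar> \<le> B1^3/3" using v1[OF that] by (simp add: power_abs power_mono)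
    then have "\<bar>v1 t - (v1 t)^3/3\<bar> \<le> B1 + B1^3/3"
      using abs_triangle_ineq4[of "v1 t" "(v1 t)^3/3"] v1[OF that] by linarith
    then have "\<bar>c * (v1 t - (v1 t)^3/3)\<bar> \<le> c * (B1 + B1^3/3)"
      using c_pos by (simp add: abs_mult mult_left_mono)
    then have "\<bar>lienard t + c * (v1 t - (v1 t)^3/3)\<bar> \<le> By + c*(B1 + B1^3/3)"
      using y[OF that] abs_triangle_ineq[of "lienard t" "c * (v1 t - (v1 t)^3/3)"] by linarith
    moreover have "v2 t = (lienard t + c * (v1 t - (v1 t)^3/3)) / a"
      using a_pos by (simp add: lienard_def)
    ultimately show ?thesis unfolding B2_def using a_pos by (simp add: divide_right_mono abs_divide)
  qed
  show ?thesis
    using v1 v2 by (intro exI[of _ "max B1 B2"]) (auto simp: le_max_iff_disj)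
qed

definition energy :: "real \<Rightarrow> real" where
  "energy t = b * (v1 t)\<^sup>2 + a * (v2 t)\<^sup>2"

lemma energy_deriv:
  assumes "t \<ge> 0"
  shows "(energy has_real_derivative 2 * a * c * (1 - (v1 t)\<^sup>2) * (v2 t)\<^sup>2) (at t within {0..})"
  unfolding energy_def[abs_def]
  by (rule derivative_eq_intros v1_deriv[OF assms] v2_deriv[OF assms] refl | simp)+
    (simp add: algebra_simps power2_eq_square)

text \<open>The energy increases while \<open>|v1| < 1\<close>, so it cannot drop below \<open>min (energy 0) b\<close>.\<close>
lemma energy_bounded_below:
  assumes "(v1 0, v2 0) \<noteq> (0, 0)"
  shows "\<exists>\<rho>>0. \<forall>t\<ge>0. \<rho> \<le> energy t"
proof -
  define \<rho> where "\<rho> = min (energy 0) b"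
  have "v1 0 \<noteq> 0 \<or> v2 0 \<noteq> 0" using assms by simp
  then have "energy 0 > 0"
    using a_pos b_pos unfolding energy_def by (auto intro: add_pos_nonneg add_nonneg_pos)
  then have "\<rho> > 0" using b_pos by (simp add: \<rho>_def)
  have "\<rho> \<le> energy 0" by (simp add: \<rho>_def)
  have "- energy t \<le> - \<rho>" if "t \<ge> 0" for t
  proof (rule halfline_sublevel_invariant[OF DERIV_minus[OF energy_deriv] _ _ that])
    show "- energy 0 \<le> - \<rho>" using \<open>\<rho> \<le> energy 0\<close> by simp
  next
    fix s :: real assume "s \<ge> 0" "- \<rho> < - energy s"
    moreover have "\<rho> \<le> b" "0 \<le> a * (v2 s)\<^sup>2" using a_pos by (simp_all add: \<rho>_def)
    ultimately have "b * (v1 s)\<^sup>2 < b * 1" unfolding energy_def by linarith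
    then have "(v1 s)\<^sup>2 < 1" using b_pos by simp
    then show "- (2 * a * c * (1 - (v1 s)\<^sup>2) * (v2 s)\<^sup>2) \<le> 0" using a_pos c_pos by simp
  qed
  with \<open>\<rho> > 0\<close> show ?thesis by auto
qed

end

section \<open>Excitation along a nonzero orbit\<close>

locale van_der_pol_orbit = van_der_pol +
  fixes B \<rho> :: real
  assumes v1_bound: "\<And>t. t \<ge> 0 \<Longrightarrow> \<bar>v1 t\<bar> \<le> B"
    and v2_bound: "\<And>t. t \<ge> 0 \<Longrightarrow> \<bar>v2 t\<bar> \<le> B"
    and energy_lower: "\<And>t. t \<ge> 0 \<Longrightarrow> \<rho> \<le> energy t"
    and \<rho>_pos: "\<rho> > 0"
begin

lemma bounded_along_orbit:
  fixes F :: "real \<Rightarrow> real \<Rightarrow> 'a::real_normed_vector"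
  assumes "continuous_on UNIV (\<lambda>z. F (fst z) (snd z))"
  shows "bounded ((\<lambda>t. F (v1 t) (v2 t)) ` {0..})"
proof (rule bounded_subset)
  show "bounded ((\<lambda>z. F (fst z) (snd z)) ` cbox (-B, -B) (B, B))"
    by (intro compact_imp_bounded compact_continuous_image continuous_on_subset[OF assms]) auto
  have "(v1 t, v2 t) \<in> cbox (-B, -B) (B, B)" if "t \<ge> 0" for t
    using v1_bound[OF that] v2_bound[OF that] by (simp add: cbox_Pair_eq abs_le_iff)
  then show "(\<lambda>t. F (v1 t) (v2 t)) ` {0..} \<subseteq> (\<lambda>z. F (fst z) (snd z)) ` cbox (-B, -B) (B, B)"
    by force
qed

lemma bounded_along_orbitE:
  fixes F :: "real \<Rightarrow> real \<Rightarrow> real"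
  assumes "continuous_on UNIV (\<lambda>z. F (fst z) (snd z))"
  obtains M where "M > 0" "\<And>t. t \<ge> 0 \<Longrightarrow> \<bar>F (v1 t) (v2 t)\<bar> \<le> M"
  using bounded_along_orbit[OF assms] that unfolding bounded_pos by auto

lemma lipschitz_along_orbit:
  assumes "\<And>t. t \<ge> 0 \<Longrightarrow> (f has_real_derivative F (v1 t) (v2 t)) (at t within {0..})"
    and "continuous_on UNIV (\<lambda>z. F (fst z) (snd z))"
  obtains L where "L > 0" "\<And>x y. 0 \<le> x \<Longrightarrow> x \<le> y \<Longrightarrow> \<bar>f y - f x\<bar> \<le> L * (y - x)"
  using lipschitz_halfline_of_bounded_deriv[OF assms(1) bounded_along_orbit[OF assms(2)]] that
  by blast

lemma orbit_avoids_origin: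
  assumes "t \<ge> 0"
  shows "sqrt (\<rho> / (2 * b)) \<le> \<bar>v1 t\<bar> \<or> sqrt (\<rho> / (2 * a)) \<le> \<bar>v2 t\<bar>"
proof (rule ccontr)
  assume "\<not> ?thesis"
  then have "(v1 t)\<^sup>2 < \<rho> / (2 * b)" "(v2 t)\<^sup>2 < \<rho> / (2 * a)"
    by (metis real_sqrt_abs real_sqrt_less_iff not_le)+
  then have "b * (v1 t)\<^sup>2 < \<rho> / 2" "a * (v2 t)\<^sup>2 < \<rho> / 2"
    using a_pos b_pos by (simp_all add: field_simps)
  then show False using energy_lower[OF assms] unfolding energy_def by linarith
qed

lemma v1_recurrently_large: "recurrently_large v1 1"
proof -
  define m1 where "m1 = sqrt (\<rho> / (2 * b))"
  define m2 where "m2 = sqrt (\<rho> / (2 * a))"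
  define \<eta> where "\<eta> = min m1 (a * m2 / 2)"
  have "\<eta> > 0" using \<rho>_pos a_pos b_pos by (simp add: \<eta>_def m1_def m2_def)
  have "\<exists>s0\<in>{s..s+1}. \<eta> \<le> \<bar>v1 s0\<bar>" if "s \<ge> 0" for s
  proof (rule ccontr)
    assume "\<not> ?thesis"
    then have small: "\<And>\<tau>. s \<le> \<tau> \<Longrightarrow> \<tau> \<le> s + 1 \<Longrightarrow> \<bar>v1 \<tau>\<bar> < \<eta>" by force
    obtain \<xi> where \<xi>: "s < \<xi>" "\<xi> < s + 1" "\<bar>a * v2 \<xi>\<bar> < 2 * \<eta>"
      using small_on_window_imp_small_deriv[OF v1_deriv \<open>s \<ge> 0\<close> small] by blast
    have "\<bar>v1 \<xi>\<bar> < m1" using small[of \<xi>] \<xi> by (simp add: \<eta>_def)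
    then have "m2 \<le> \<bar>v2 \<xi>\<bar>" using orbit_avoids_origin[of \<xi>] \<xi> \<open>s \<ge> 0\<close> by (auto simp: m1_def m2_def)
    then have "a * m2 \<le> \<bar>a * v2 \<xi>\<bar>" using a_pos by (simp add: abs_mult)
    moreover have "2 * \<eta> \<le> a * m2" by (simp add: \<eta>_def)
    ultimately show False using \<xi>(3) by linarith
  qed
  with \<open>\<eta> > 0\<close> show ?thesis unfolding recurrently_large_def by blast
qed

text \<open>If \<open>v2\<close> stays small on \<open>[s, s+1]\<close>, then \<open>v1\<close> is large and nearly constant there,
  so the term \<open>- b v1\<close> keeps \<open>v2'\<close> away from zero.\<close>
lemma v2_recurrently_large: "recurrently_large v2 1"
proof -
  obtain K where "K > 0" and K: "\<And>t. t \<ge> 0 \<Longrightarrow> \<bar>1 - (v1 t)\<^sup>2\<bar> \<le> K"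
    by (rule bounded_along_orbitE[where F="\<lambda>p q. 1 - p\<^sup>2"]) (auto intro!: continuous_intros)
  define m1 where "m1 = sqrt (\<rho> / (2 * b))"
  define m2 where "m2 = sqrt (\<rho> / (2 * a))"
  define D where "D = 2 + a * b + c * K"
  have "D > 0" using a_pos b_pos c_pos \<open>K > 0\<close> by (simp add: D_def add_pos_nonneg)
  define \<eta> where "\<eta> = min m2 (b * m1 / D)"
  have "\<eta> > 0" using \<rho>_pos a_pos b_pos \<open>D > 0\<close> by (simp add: \<eta>_def m1_def m2_def)
  have "\<exists>s0\<in>{s..s+1}. \<eta> \<le> \<bar>v2 s0\<bar>" if "s \<ge> 0" for s
  proof (rule ccontr)
    assume "\<not> ?thesis"
    then have small: "\<And>\<tau>. s \<le> \<tau> \<Longrightarrow> \<tau> \<le> s + 1 \<Longrightarrow> \<bar>v2 \<tau>\<bar> < \<eta>" by force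
    have "\<bar>v2 s\<bar> < m2" using small[of s] by (simp add: \<eta>_def)
    then have "m1 \<le> \<bar>v1 s\<bar>" using orbit_avoids_origin[OF \<open>s \<ge> 0\<close>] by (auto simp: m1_def m2_def)
    obtain \<xi> where \<xi>: "s < \<xi>" "\<xi> < s + 1"
      and "\<bar>- b * v1 \<xi> + c * (1 - (v1 \<xi>)\<^sup>2) * v2 \<xi>\<bar> < 2 * \<eta>"
      using small_on_window_imp_small_deriv[OF v2_deriv \<open>s \<ge> 0\<close> small] by blast
    moreover have "\<bar>c * (1 - (v1 \<xi>)\<^sup>2) * v2 \<xi>\<bar> \<le> c * K * \<eta>"
      unfolding abs_mult using K[of \<xi>] small[of \<xi>] \<xi> \<open>s \<ge> 0\<close> c_pos \<open>K > 0\<close>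
      by (intro mult_mono) auto
    ultimately have v1_\<xi>: "b * \<bar>v1 \<xi>\<bar> < 2 * \<eta> + c * K * \<eta>"
      using abs_triangle_ineq4[of "- b * v1 \<xi> + c * (1 - (v1 \<xi>)\<^sup>2) * v2 \<xi>" "c * (1 - (v1 \<xi>)\<^sup>2) * v2 \<xi>"]
        b_pos by (simp add: abs_mult)
    obtain \<zeta> where \<zeta>: "s < \<zeta>" "\<zeta> < \<xi>" "v1 \<xi> - v1 s = a * v2 \<zeta> * (\<xi> - s)"
      using mvt_halfline[OF v1_deriv \<open>s \<ge> 0\<close> \<xi>(1)] by blast
    have "\<bar>v1 \<xi> - v1 s\<bar> = a * \<bar>v2 \<zeta>\<bar> * (\<xi> - s)" using \<zeta> a_pos by (simp add: abs_mult)
    also have "\<dots> \<le> a * \<eta> * 1" using small[of \<zeta>] \<zeta> \<xi> a_pos by (intro mult_mono) auto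
    finally have "\<bar>v1 \<xi> - v1 s\<bar> \<le> a * \<eta>" by simp
    have "D * \<eta> \<le> D * (b * m1 / D)" using \<open>D > 0\<close> by (intro mult_left_mono) (auto simp: \<eta>_def)
    then have "D * \<eta> \<le> b * m1" using \<open>D > 0\<close> by simp
    moreover have "b * m1 \<le> b * \<bar>v1 s\<bar>" using \<open>m1 \<le> \<bar>v1 s\<bar>\<close> b_pos by simp
    moreover have "b * \<bar>v1 s\<bar> \<le> b * \<bar>v1 \<xi>\<bar> + a * b * \<eta>"
      using \<open>\<bar>v1 \<xi> - v1 s\<bar> \<le> a * \<eta>\<close> b_pos mult_left_mono[of "\<bar>v1 s\<bar>" "\<bar>v1 \<xi>\<bar> + a * \<eta>" b]
      by (simp add: algebra_simps)
    ultimately show False using v1_\<xi> by (simp add: D_def algebra_simps)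
  qed
  with \<open>\<eta> > 0\<close> show ?thesis unfolding recurrently_large_def by blast
qed

lemma v1_increment_bounds:
  assumes "0 \<le> s" "0 < r" and large: "\<And>\<tau>. s \<le> \<tau> \<Longrightarrow> \<tau> \<le> s + r \<Longrightarrow> m \<le> \<bar>v2 \<tau>\<bar>"
  shows "a * m * r \<le> \<bar>v1 (s + r) - v1 s\<bar>" "\<bar>v1 (s + r) - v1 s\<bar> \<le> a * B * r"
proof -
  obtain \<xi> where \<xi>: "s < \<xi>" "\<xi> < s + r" "v1 (s + r) - v1 s = a * v2 \<xi> * (s + r - s)"
    using mvt_halfline[OF v1_deriv \<open>0 \<le> s\<close>, of "s + r"] \<open>0 < r\<close> by auto
  then have "\<bar>v1 (s + r) - v1 s\<bar> = a * \<bar>v2 \<xi>\<bar> * r" using a_pos by (simp add: abs_mult)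
  moreover have "m \<le> \<bar>v2 \<xi>\<bar>" "\<bar>v2 \<xi>\<bar> \<le> B" using large[of \<xi>] v2_bound[of \<xi>] \<xi> \<open>0 \<le> s\<close> by auto
  ultimately show "a * m * r \<le> \<bar>v1 (s + r) - v1 s\<bar>" "\<bar>v1 (s + r) - v1 s\<bar> \<le> a * B * r"
    using a_pos \<open>0 < r\<close> by (simp_all add: mult_right_mono mult_left_mono)
qed

text \<open>If \<open>|(1 - v1\<^sup>2) v2| < \<eta>\<close> while \<open>|v2| \<ge> m\<close>, then \<open>v1\<^sup>2\<close> stays close to \<open>1\<close>; yet \<open>v1\<close>
  moves by at least \<open>a m r\<close>, because \<open>v1' = a v2\<close>.\<close>
lemma damping_not_small_while_v2_large:
  assumes "0 \<le> s" "0 < r" "a * B * r \<le> 1/2" "m > 0"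
    and large: "\<And>\<tau>. s \<le> \<tau> \<Longrightarrow> \<tau> \<le> s + r \<Longrightarrow> m \<le> \<bar>v2 \<tau>\<bar>"
    and small: "\<And>\<tau>. s \<le> \<tau> \<Longrightarrow> \<tau> \<le> s + r \<Longrightarrow> \<bar>damping \<tau>\<bar> < \<eta>"
    and "\<eta> \<le> 3/4 * m" "\<eta> \<le> a * r * m\<^sup>2 / 2"
  shows False
proof -
  have near: "\<bar>1 - (v1 \<tau>)\<^sup>2\<bar> * m < \<eta>" if "s \<le> \<tau>" "\<tau> \<le> s + r" for \<tau>
  proof -
    have "\<bar>1 - (v1 \<tau>)\<^sup>2\<bar> * m \<le> \<bar>damping \<tau>\<bar>"
      unfolding damping_def abs_mult using large[OF that] by (intro mult_left_mono) auto
    with small[OF that] show ?thesis by linarith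
  qed
  define p where "p = v1 s"
  define q where "q = v1 (s + r)"
  have p: "\<bar>1 - p\<^sup>2\<bar> * m < \<eta>" and q: "\<bar>1 - q\<^sup>2\<bar> * m < \<eta>"
    using near[of s] near[of "s + r"] \<open>0 < r\<close> by (simp_all add: p_def q_def)
  have "\<bar>1 - p\<^sup>2\<bar> * m < 3/4 * m" "\<bar>1 - q\<^sup>2\<bar> * m < 3/4 * m" using p q \<open>\<eta> \<le> 3/4 * m\<close> by linarith+
  then have "\<bar>1 - p\<^sup>2\<bar> < 3/4" "\<bar>1 - q\<^sup>2\<bar> < 3/4" using \<open>m > 0\<close> by (auto elim: mult_right_less_imp_less)
  moreover have "a * m * r \<le> \<bar>q - p\<bar>" "\<bar>q - p\<bar> \<le> 1/2"
    using v1_increment_bounds[OF \<open>0 \<le> s\<close> \<open>0 < r\<close> large] \<open>a * B * r \<le> 1/2\<close>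
    by (simp_all add: p_def q_def)
  ultimately have "a * m * r \<le> \<bar>1 - p\<^sup>2\<bar> + \<bar>1 - q\<^sup>2\<bar>"
    using dist_le_near_unit_squares by fastforce
  moreover have "\<bar>1 - p\<^sup>2\<bar> + \<bar>1 - q\<^sup>2\<bar> < a * m * r"
  proof (rule mult_right_less_imp_less)
    show "(\<bar>1 - p\<^sup>2\<bar> + \<bar>1 - q\<^sup>2\<bar>) * m < a * m * r * m"
      using p q \<open>\<eta> \<le> a * r * m\<^sup>2 / 2\<close> distrib_right[of "\<bar>1 - p\<^sup>2\<bar>" "\<bar>1 - q\<^sup>2\<bar>" m]
      by (simp add: power2_eq_square mult_ac)
  qed (use \<open>m > 0\<close> in simp)
  ultimately show False by linarith
qed

lemma damping_recurrently_large: "recurrently_large damping 2"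
proof -
  obtain \<eta>2 where "\<eta>2 > 0" and large: "\<And>s. s \<ge> 0 \<Longrightarrow> \<exists>s1\<in>{s..s+1}. \<eta>2 \<le> \<bar>v2 s1\<bar>"
    using v2_recurrently_large unfolding recurrently_large_def by blast
  obtain L where "L > 0" and lip: "\<And>x y. 0 \<le> x \<Longrightarrow> x \<le> y \<Longrightarrow> \<bar>v2 y - v2 x\<bar> \<le> L * (y - x)"
    by (rule lipschitz_along_orbit[where F="\<lambda>p q. - b * p + c * (1 - p\<^sup>2) * q", OF v2_deriv])
      (auto intro!: continuous_intros)
  have "B \<ge> 0" using v1_bound[of 0] by simp
  define r where "r = min 1 (min (\<eta>2 / (2 * L)) (1 / (2 * (a * B + 1))))"
  have "0 \<le> a * B" using \<open>B \<ge> 0\<close> a_pos by simp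
  then have "0 < r" "r \<le> 1" using \<open>\<eta>2 > 0\<close> \<open>L > 0\<close> by (simp_all add: r_def)
  have "L * r \<le> L * (\<eta>2 / (2 * L))" using \<open>L > 0\<close> by (intro mult_left_mono) (auto simp: r_def)
  then have "L * r \<le> \<eta>2 / 2" using \<open>L > 0\<close> by simp
  have "(a * B + 1) * r \<le> (a * B + 1) * (1 / (2 * (a * B + 1)))"
    using \<open>0 \<le> a * B\<close> by (intro mult_left_mono) (auto simp: r_def)
  also have "\<dots> = 1/2" using \<open>0 \<le> a * B\<close> by simp
  finally have "a * B * r \<le> 1/2" using \<open>0 < r\<close> by (simp add: distrib_right)
  define \<eta> where "\<eta> = min (3/4 * (\<eta>2 / 2)) (a * r * (\<eta>2 / 2)\<^sup>2 / 2)"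
  have "\<eta> > 0" using \<open>\<eta>2 > 0\<close> a_pos \<open>0 < r\<close> by (simp add: \<eta>_def)
  have "\<exists>s0\<in>{s..s+2}. \<eta> \<le> \<bar>damping s0\<bar>" if "s \<ge> 0" for s
  proof (rule ccontr)
    assume "\<not> ?thesis"
    then have small: "\<And>\<tau>. s \<le> \<tau> \<Longrightarrow> \<tau> \<le> s + 2 \<Longrightarrow> \<bar>damping \<tau>\<bar> < \<eta>" by force
    obtain s1 where s1: "s \<le> s1" "s1 \<le> s + 1" "\<eta>2 \<le> \<bar>v2 s1\<bar>" using large[OF \<open>s \<ge> 0\<close>] by auto
    have "0 \<le> s1" using s1 \<open>s \<ge> 0\<close> by linarith
    show False
    proof (rule damping_not_small_while_v2_large[OF \<open>0 \<le> s1\<close> \<open>0 < r\<close> \<open>a * B * r \<le> 1/2\<close>])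
      fix \<tau> assume "s1 \<le> \<tau>" "\<tau> \<le> s1 + r"
      moreover have "L * (\<tau> - s1) \<le> L * r" using \<open>\<tau> \<le> s1 + r\<close> \<open>L > 0\<close> by (intro mult_left_mono) auto
      ultimately show "\<eta>2 / 2 \<le> \<bar>v2 \<tau>\<bar>"
        using lipschitz_keeps_half[OF lip \<open>0 \<le> s1\<close> s1(3)] \<open>L * r \<le> \<eta>2 / 2\<close> by simp
      show "\<bar>damping \<tau>\<bar> < \<eta>" using small \<open>s1 \<le> \<tau>\<close> \<open>\<tau> \<le> s1 + r\<close> s1 \<open>r \<le> 1\<close> by simp
    qed (use \<open>\<eta>2 > 0\<close> in \<open>auto simp: \<eta>_def\<close>)
  qed
  with \<open>\<eta> > 0\<close> show ?thesis unfolding recurrently_large_def by blast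
qed

lemma integral_squares_bounded_below:
  obtains \<kappa> where "\<kappa> > 0"
    "\<And>s. s \<ge> 0 \<Longrightarrow> \<kappa> \<le> integral {s..s+3} (\<lambda>\<tau>. (v1 \<tau>)\<^sup>2)"
    "\<And>s. s \<ge> 0 \<Longrightarrow> \<kappa> \<le> integral {s..s+3} (\<lambda>\<tau>. (v2 \<tau>)\<^sup>2)"
    "\<And>s. s \<ge> 0 \<Longrightarrow> \<kappa> \<le> integral {s..s+3} (\<lambda>\<tau>. (damping \<tau>)\<^sup>2)"
proof -
  have window: "\<exists>\<kappa>>0. \<forall>s\<ge>0. \<kappa> \<le> integral {s..s+3} (\<lambda>\<tau>. (g \<tau>)\<^sup>2)"
    if deriv: "\<And>t. t \<ge> 0 \<Longrightarrow> (g has_real_derivative F (v1 t) (v2 t)) (at t within {0..})"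
      and cont: "continuous_on UNIV (\<lambda>z. F (fst z) (snd z))" and large: "recurrently_large g 2"
    for g F
  proof -
    obtain L where "L > 0" "\<And>x y. 0 \<le> x \<Longrightarrow> x \<le> y \<Longrightarrow> \<bar>g y - g x\<bar> \<le> L * (y - x)"
      using lipschitz_along_orbit[OF deriv cont] by blast
    from integral_square_bounded_below[OF continuous_on_halfline[OF deriv] this(2) this(1) large]
    show ?thesis by (simp add: add.assoc)
  qed
  have "\<exists>\<kappa>>0. \<forall>s\<ge>0. \<kappa> \<le> integral {s..s+3} (\<lambda>\<tau>. (v1 \<tau>)\<^sup>2)"
    by (rule window[where F="\<lambda>p q. a * q", OF v1_deriv _
          recurrently_large_mono[OF v1_recurrently_large]])
      (auto intro!: continuous_intros)
  then obtain \<kappa>1 where "\<kappa>1 > 0" and \<kappa>1: "\<forall>s\<ge>0. \<kappa>1 \<le> integral {s..s+3} (\<lambda>\<tau>. (v1 \<tau>)\<^sup>2)" by blast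
  have "\<exists>\<kappa>>0. \<forall>s\<ge>0. \<kappa> \<le> integral {s..s+3} (\<lambda>\<tau>. (v2 \<tau>)\<^sup>2)"
    by (rule window[where F="\<lambda>p q. - b * p + c * (1 - p\<^sup>2) * q", OF v2_deriv _
          recurrently_large_mono[OF v2_recurrently_large]])
      (auto intro!: continuous_intros)
  then obtain \<kappa>2 where "\<kappa>2 > 0" and \<kappa>2: "\<forall>s\<ge>0. \<kappa>2 \<le> integral {s..s+3} (\<lambda>\<tau>. (v2 \<tau>)\<^sup>2)" by blast
  have "\<exists>\<kappa>>0. \<forall>s\<ge>0. \<kappa> \<le> integral {s..s+3} (\<lambda>\<tau>. (damping \<tau>)\<^sup>2)"
    by (rule window[where F="\<lambda>p q. - 2 * a * p * q\<^sup>2 + (1 - p\<^sup>2) * (- b * p + c * (1 - p\<^sup>2) * q)",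
          OF damping_deriv _ damping_recurrently_large])
      (auto intro!: continuous_intros)
  then obtain \<kappa>3 where "\<kappa>3 > 0" and \<kappa>3: "\<forall>s\<ge>0. \<kappa>3 \<le> integral {s..s+3} (\<lambda>\<tau>. (damping \<tau>)\<^sup>2)" by blast
  show thesis
    by (rule that[of "min \<kappa>1 (min \<kappa>2 \<kappa>3)"])
      (use \<open>\<kappa>1 > 0\<close> \<open>\<kappa>2 > 0\<close> \<open>\<kappa>3 > 0\<close> \<kappa>1 \<kappa>2 \<kappa>3 in \<open>auto simp: min_le_iff_disj\<close>)
qed

text \<open>The cross term of the Gram form integrates exactly: \<open>a v1 (1 - v1\<^sup>2) v2\<close> is the
  derivative of \<open>v1\<^sup>2/2 - v1\<^sup>4/4\<close>, which is bounded along the orbit.\<close>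
lemma integral_cross_term_bounded:
  obtains C where "\<And>t T. 0 \<le> t \<Longrightarrow> t \<le> T \<Longrightarrow> \<bar>integral {t..T} (\<lambda>s. v1 s * damping s)\<bar> \<le> C"
proof -
  define G where "G p = p\<^sup>2/2 - p^4/4" for p :: real
  obtain M where M: "\<And>t. t \<ge> 0 \<Longrightarrow> \<bar>G (v1 t)\<bar> \<le> M"
    by (rule bounded_along_orbitE[where F="\<lambda>p q. G p"]) (auto simp: G_def intro!: continuous_intros)
  have "\<bar>integral {t..T} (\<lambda>s. v1 s * damping s)\<bar> \<le> 2 * M / a" if "0 \<le> t" "t \<le> T" for t T
  proof -
    have "((\<lambda>s. a * (v1 s * damping s)) has_integral G (v1 T) - G (v1 t)) {t..T}"
    proof (rule Henstock_Kurzweil_Integration.fundamental_theorem_of_calculus[OF \<open>t \<le> T\<close>])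
      fix s assume "s \<in> {t..T}"
      with that have "s \<ge> 0" by simp
      have "((\<lambda>s. G (v1 s)) has_real_derivative a * (v1 s * damping s)) (at s within {0..})"
        unfolding G_def damping_def
        by (rule derivative_eq_intros v1_deriv[OF \<open>s \<ge> 0\<close>] refl | simp)+
          (simp add: algebra_simps power2_eq_square power3_eq_cube)
      then have "((\<lambda>s. G (v1 s)) has_real_derivative a * (v1 s * damping s)) (at s within {t..T})"
        by (rule has_field_derivative_subset) (use that in auto)
      then show "((\<lambda>s. G (v1 s)) has_vector_derivative a * (v1 s * damping s)) (at s within {t..T})"
        by (simp add: has_real_derivative_iff_has_vector_derivative)
    qed
    from has_integral_mult_right[OF this, of "1 / a"]
    have "((\<lambda>s. v1 s * damping s) has_integral (G (v1 T) - G (v1 t)) / a) {t..T}"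
      using a_pos by simp
    then have "integral {t..T} (\<lambda>s. v1 s * damping s) = (G (v1 T) - G (v1 t)) / a"
      by (rule integral_unique)
    moreover have "\<bar>G (v1 T) - G (v1 t)\<bar> \<le> 2 * M" using M[of t] M[of T] that by linarith
    ultimately show ?thesis using a_pos by (simp add: abs_divide divide_right_mono)
  qed
  then show thesis by (rule that)
qed

lemma inner_integral_gram:
  fixes x :: "real^3"
  assumes "0 \<le> t"
  shows "x \<bullet> (integral {t..T} (\<lambda>s. transpose (vdp_phi (v1 s) (v2 s))
        ** transpose (transpose (vdp_phi (v1 s) (v2 s)))) *v x)
    = (x$1)\<^sup>2 * integral {t..T} (\<lambda>s. (v2 s)\<^sup>2) + (x$2)\<^sup>2 * integral {t..T} (\<lambda>s. (v1 s)\<^sup>2)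
      + (x$3)\<^sup>2 * integral {t..T} (\<lambda>s. (damping s)\<^sup>2)
      - 2 * (x$2 * x$3) * integral {t..T} (\<lambda>s. v1 s * damping s)"
proof -
  have int: "g integrable_on {t..T}" if "continuous_on {0..} g" for g :: "real \<Rightarrow> 'b::banach"
    by (rule integrable_continuous_interval, rule continuous_on_subset[OF that]) (use assms in auto)
  note cont = continuous_v1 continuous_v2 continuous_damping
  have expanded: "((\<lambda>s. (x$1)\<^sup>2 * (v2 s)\<^sup>2 + (x$2)\<^sup>2 * (v1 s)\<^sup>2 + (x$3)\<^sup>2 * (damping s)\<^sup>2
      - 2 * (x$2 * x$3) * (v1 s * damping s)) has_integral
      (x$1)\<^sup>2 * integral {t..T} (\<lambda>s. (v2 s)\<^sup>2) + (x$2)\<^sup>2 * integral {t..T} (\<lambda>s. (v1 s)\<^sup>2)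
      + (x$3)\<^sup>2 * integral {t..T} (\<lambda>s. (damping s)\<^sup>2)
      - 2 * (x$2 * x$3) * integral {t..T} (\<lambda>s. v1 s * damping s)) {t..T}"
    by (intro has_integral_diff has_integral_add has_integral_mult_right integrable_integral int
        continuous_intros cont)
  have "x \<bullet> (integral {t..T} (\<lambda>s. transpose (vdp_phi (v1 s) (v2 s))
        ** transpose (transpose (vdp_phi (v1 s) (v2 s)))) *v x)
      = integral {t..T} (\<lambda>s. x \<bullet> ((transpose (vdp_phi (v1 s) (v2 s))
        ** transpose (transpose (vdp_phi (v1 s) (v2 s)))) *v x))"
    by (intro inner_integral_mult_vec int continuous_on_vdp_gram continuous_v1 continuous_v2)
  also have "\<dots> = integral {t..T} (\<lambda>s. (x$1)\<^sup>2 * (v2 s)\<^sup>2 + (x$2)\<^sup>2 * (v1 s)\<^sup>2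
      + (x$3)\<^sup>2 * (damping s)\<^sup>2 - 2 * (x$2 * x$3) * (v1 s * damping s))"
    by (intro integral_cong)
      (simp only: vdp_gram_quadratic_form, simp add: damping_def power2_eq_square algebra_simps)
  also have "\<dots> = (x$1)\<^sup>2 * integral {t..T} (\<lambda>s. (v2 s)\<^sup>2) + (x$2)\<^sup>2 * integral {t..T} (\<lambda>s. (v1 s)\<^sup>2)
      + (x$3)\<^sup>2 * integral {t..T} (\<lambda>s. (damping s)\<^sup>2)
      - 2 * (x$2 * x$3) * integral {t..T} (\<lambda>s. v1 s * damping s)"
    using expanded by (rule integral_unique)
  finally show ?thesis .
qed

lemma gram_integral_lower_bound:
  obtains \<kappa> T0 where "\<kappa> > 0" "T0 > 0"
    "\<And>t x. t \<ge> 0 \<Longrightarrow> \<kappa> * (x \<bullet> x) \<le> x \<bullet> (integral {t..t+T0} (\<lambda>s.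
        transpose (vdp_phi (v1 s) (v2 s)) ** transpose (transpose (vdp_phi (v1 s) (v2 s)))) *v x)"
proof -
  obtain \<kappa> where "\<kappa> > 0"
    and w1: "\<And>s. s \<ge> 0 \<Longrightarrow> \<kappa> \<le> integral {s..s+3} (\<lambda>\<tau>. (v1 \<tau>)\<^sup>2)"
    and w2: "\<And>s. s \<ge> 0 \<Longrightarrow> \<kappa> \<le> integral {s..s+3} (\<lambda>\<tau>. (v2 \<tau>)\<^sup>2)"
    and w3: "\<And>s. s \<ge> 0 \<Longrightarrow> \<kappa> \<le> integral {s..s+3} (\<lambda>\<tau>. (damping \<tau>)\<^sup>2)"
    using integral_squares_bounded_below by blast
  obtain C where C: "\<And>t T. 0 \<le> t \<Longrightarrow> t \<le> T \<Longrightarrow> \<bar>integral {t..T} (\<lambda>s. v1 s * damping s)\<bar> \<le> C"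
    using integral_cross_term_bounded by blast
  define N where "N = nat \<lceil>C / \<kappa>\<rceil> + 1"
  have "C + \<kappa> \<le> real N * \<kappa>"
    using \<open>\<kappa> > 0\<close> real_nat_ceiling_ge[of "C / \<kappa>"] by (simp add: N_def field_simps)
  have many_windows: "real N * \<kappa> \<le> integral {t..t + real N * 3} g"
    if "t \<ge> 0" "continuous_on {0..} g" "\<And>s. s \<ge> 0 \<Longrightarrow> \<kappa> \<le> integral {s..s+3} g"
    for t :: real and g
    using integral_ge_multiple_of_windows[OF that(2,3) _ that(1)] by simp
  show thesis
  proof (rule that[of \<kappa> "real N * 3"])
    fix t :: real and x :: "real^3" assume "t \<ge> 0"
    have "x \<bullet> x = (x$1)\<^sup>2 + (x$2)\<^sup>2 + (x$3)\<^sup>2"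
      by (simp add: inner_vec_def sum_3 power2_eq_square)
    moreover have "((x$1)\<^sup>2 + (x$2)\<^sup>2 + (x$3)\<^sup>2) * \<kappa> \<le> x \<bullet> (integral {t..t + real N * 3} (\<lambda>s.
        transpose (vdp_phi (v1 s) (v2 s)) ** transpose (transpose (vdp_phi (v1 s) (v2 s)))) *v x)"
      unfolding inner_integral_gram[OF \<open>t \<ge> 0\<close>]
    proof (rule quadratic_form_lower_bound)
      show "real N * \<kappa> \<le> integral {t..t + real N * 3} (\<lambda>s. (v2 s)\<^sup>2)"
        by (rule many_windows[OF \<open>t \<ge> 0\<close> _ w2]) (intro continuous_intros continuous_v2)
      show "real N * \<kappa> \<le> integral {t..t + real N * 3} (\<lambda>s. (v1 s)\<^sup>2)"
        by (rule many_windows[OF \<open>t \<ge> 0\<close> _ w1]) (intro continuous_intros continuous_v1)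
      show "real N * \<kappa> \<le> integral {t..t + real N * 3} (\<lambda>s. (damping s)\<^sup>2)"
        by (rule many_windows[OF \<open>t \<ge> 0\<close> _ w3]) (intro continuous_intros continuous_damping)
      show "\<bar>integral {t..t + real N * 3} (\<lambda>s. v1 s * damping s)\<bar> \<le> C"
        by (rule C) (use \<open>t \<ge> 0\<close> in auto)
    qed (fact \<open>C + \<kappa> \<le> real N * \<kappa>\<close>)
    ultimately show "\<kappa> * (x \<bullet> x) \<le> x \<bullet> (integral {t..t + real N * 3} (\<lambda>s.
        transpose (vdp_phi (v1 s) (v2 s)) ** transpose (transpose (vdp_phi (v1 s) (v2 s)))) *v x)"
      by (simp add: mult.commute)
  qed (use \<open>\<kappa> > 0\<close> in \<open>auto simp: N_def\<close>)
qed

lemma persistently_exciting_regressor: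
  "persistently_exciting (\<lambda>t. transpose (vdp_phi (v1 t) (v2 t)))"
proof -
  obtain \<kappa> T0 where "\<kappa> > 0" "T0 > 0" and gram: "\<And>t x. t \<ge> 0 \<Longrightarrow> \<kappa> * (x \<bullet> x) \<le> x \<bullet>
      (integral {t..t+T0} (\<lambda>s. transpose (vdp_phi (v1 s) (v2 s))
        ** transpose (transpose (vdp_phi (v1 s) (v2 s)))) *v x)"
    using gram_integral_lower_bound by blast
  have "0 \<le> x \<bullet> (((1 / T0) *\<^sub>R integral {t..t+T0} (\<lambda>s. transpose (vdp_phi (v1 s) (v2 s))
      ** transpose (transpose (vdp_phi (v1 s) (v2 s)))) - (\<kappa> / T0) *\<^sub>R mat 1) *v x)"
    if "t \<ge> 0" for t and x :: "real^3"
    using gram[OF that, of x] \<open>T0 > 0\<close>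
    by (simp add: matrix_vector_mult_diff_rdistrib scaleR_matrix_vector_assoc[symmetric]
        inner_diff_right divide_simps)
  moreover have "bounded ((\<lambda>t. transpose (vdp_phi (v1 t) (v2 t))) ` {0..})"
    by (rule bounded_along_orbit) (intro continuous_on_vdp_regressor continuous_intros)
  moreover have "piecewise_continuous (\<lambda>t. transpose (vdp_phi (v1 t) (v2 t)))"
    by (intro piecewise_continuous_if_continuous continuous_on_vdp_regressor continuous_v1 continuous_v2)
  ultimately show ?thesis
    unfolding persistently_exciting_def using \<open>\<kappa> > 0\<close> \<open>T0 > 0\<close>
    by (intro conjI exI[of _ "\<kappa> / T0"] exI[of _ 1] exI[of _ T0]) auto
qed

end

theorem mainTheorem4:
  fixes a b c :: real and v1 v2 :: "real \<Rightarrow> real"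
  assumes "a > 0" "b > 0" "c > 0"
    and "\<And>t. t \<ge> 0 \<Longrightarrow> (v1 has_real_derivative a * v2 t) (at t within {0..})"
    and "\<And>t. t \<ge> 0 \<Longrightarrow> (v2 has_real_derivative (- b * v1 t + c * (1 - (v1 t)\<^sup>2) * v2 t)) (at t within {0..})"
    and "(v1 0, v2 0) \<noteq> (0, 0)"
  shows "persistently_exciting (\<lambda>t. transpose (vdp_phi (v1 t) (v2 t)))"
proof -
  interpret van_der_pol a b c v1 v2
    using assms(1-5) by unfold_locales auto
  obtain B where "\<And>t. t \<ge> 0 \<Longrightarrow> \<bar>v1 t\<bar> \<le> B \<and> \<bar>v2 t\<bar> \<le> B"
    using trajectory_bounded by blast
  moreover obtain \<rho> where "\<rho> > 0" "\<And>t. t \<ge> 0 \<Longrightarrow> \<rho> \<le> energy t"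
    using energy_bounded_below[OF assms(6)] by blast
  ultimately interpret van_der_pol_orbit a b c v1 v2 B \<rho>
    by unfold_locales auto
  show ?thesis by (rule persistently_exciting_regressor)
qed

end
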